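(* Let $b>1$ be an integer, let $H$ be a generalized $b$-happy function with digit mean $\mu$ and digit standard deviation $\sigma$, and let $C\subseteq\mathbb{N}$. Suppose $I$ is an $n$-strict interval with type-$C$ density $d$, where the positive integer $n$ satisfies bound (B): (B1) $4\left(1+3\mu+\sqrt{2}\,\sigma\, b^{5n/8}\right)\le b^{n-1}$, (B2) $\sqrt{3\mu b}\,\sigma\le b^{3n/8}$, (B3) $4\mu\left(3\mu+1+b^{3n/4}+2\sigma\mu^{-1/2}b^{5n/8}\right)\le b^{n-1}$. Then there exist an integer $n_2\ge \frac{b^{n-1}}{\mu}$ and an $n_2$-strict interval $I_2$ whose type-$C$ density is at least $$d\left(1-b^{-n/4}\right)\left(1-\frac{2\sigma}{\sqrt{\mu}}b^{-n/8}\right).$$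
   Context: A generalized $b$-happy function: fix an integer $b>1$ and non-negative integers $h(0),\dots,h(b-1)$ with $h(0)=0$, $h(1)=1$; for $n=\sum_{i=0}^k a_ib^i$ in base $b$, $H(n)=\sum_{i=0}^k h(a_i)$. Digit mean $\mu=\frac1b\sum_{j=0}^{b-1}h(j)$, digit variance $\sigma^2=\frac1b\sum_{j=0}^{b-1}(h(j)-\mu)^2$. An integer $n$ is type-$C$ if $H^k(n)\in C$ for some integer $k\ge0$. An integer interval $[a,c]$ is the set of integers $x$ with $a\le x\le c$; $|I|$ is its cardinality. The type-$C$ density of a finite nonempty integer interval $I$ is $|\{n\in I:n\text{ type-}C\}|/|I|$. For a positive integer $m$, an integer interval $I$ is $m$-strict if $I\subseteq[b^{m-1},b^m-1]$ and $|I|=b^{3m/4}$. *)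

theory Defs
  imports Complex_Main
begin

text \<open>Since h 0 = 0, summing over
  the positions 0..n (which include all digits of n since n < b^(n+1)) is exact.\<close>

definition gen_happy :: "nat \<Rightarrow> (nat \<Rightarrow> nat) \<Rightarrow> nat \<Rightarrow> nat" where
  "gen_happy b h n = (\<Sum>i\<le>n. h (n div b ^ i mod b))"

definition is_happy_digit_fun :: "nat \<Rightarrow> (nat \<Rightarrow> nat) \<Rightarrow> bool" where
  "is_happy_digit_fun b h \<longleftrightarrow> b > 1 \<and> h 0 = 0 \<and> h 1 = 1"

definition digit_mean :: "nat \<Rightarrow> (nat \<Rightarrow> nat) \<Rightarrow> real" where
  "digit_mean b h = (1 / real b) * (\<Sum>j<b. real (h j))"

definition digit_sd :: "nat \<Rightarrow> (nat \<Rightarrow> nat) \<Rightarrow> real" where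
  "digit_sd b h = sqrt ((1 / real b) * (\<Sum>j<b. (real (h j) - digit_mean b h)^2))"

definition typeC :: "nat \<Rightarrow> (nat \<Rightarrow> nat) \<Rightarrow> nat set \<Rightarrow> nat \<Rightarrow> bool" where
  "typeC b h C n \<longleftrightarrow> (\<exists>k. (gen_happy b h ^^ k) n \<in> C)"

definition typeC_density :: "nat \<Rightarrow> (nat \<Rightarrow> nat) \<Rightarrow> nat set \<Rightarrow> nat set \<Rightarrow> real" where
  "typeC_density b h C I = real (card {n \<in> I. typeC b h C n}) / real (card I)"

definition int_interval :: "nat set \<Rightarrow> bool" where
  "int_interval I \<longleftrightarrow> (\<exists>a c. I = {a..c})"

definition strict_interval :: "nat \<Rightarrow> nat \<Rightarrow> nat set \<Rightarrow> bool" where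
  "strict_interval b m I \<longleftrightarrow> m > 0 \<and> int_interval I \<and> I \<subseteq> {b^(m-1) .. b^m - 1}
     \<and> real (card I) = real b powr (3 * real m / 4)"

end

theory Submission
  imports Defs
begin

text \<open>Let a = min I, choose m with 3 m \<mu> roughly a - t and put k = 3 m. If the top m digits P of
  a number with 4 m digits contribute s to H, then H maps the block P b^k + [0, b^k), which is a
  (4 m)-strict interval, onto s + H(y) for y < b^k. Over y < b^k the digit sum H(y) has mean k \<mu>
  and variance k \<sigma>^2, so by Chebyshev's inequality all but a fraction b^(-n/4) of the y are
  typical: H(y) lies within t = \<sigma> / sqrt \<mu> b^(n/8) sqrt a of k \<mu>. For a typical y the values
  x - H(y), x \<in> I, fall into a window W of fewer than card I + 2 t integers inside [1, m]. Double
  counting the pairs (s, y) with s + H(y) type-C in I yields an s \<in> W whose block has type-C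
  density at least d (typical fraction) card I / card W. The bounds (B1) and (B3) guarantee that a
  suitable m exists.\<close>

section \<open>Digit sums and prefixes\<close>

definition digit_sum :: "nat \<Rightarrow> (nat \<Rightarrow> nat) \<Rightarrow> nat \<Rightarrow> nat \<Rightarrow> nat" where
  "digit_sum b h k x = (\<Sum>i<k. h (x div b ^ i mod b))"

lemma digit_of_mod_power:
  fixes b x :: nat
  assumes "b > 0" "i < k"
  shows "x mod b ^ k div b ^ i mod b = x div b ^ i mod b"
proof -
  have "b ^ k = b ^ i * b ^ (k - i)" using assms by (simp add: power_add[symmetric])
  then have "x mod b ^ k div b ^ i = x div b ^ i mod b ^ (k - i)"
    using assms(1) by (simp add: mod_mult2_eq)
  moreover have "b dvd b ^ (k - i)" using assms by simp
  ultimately show ?thesis by (simp add: mod_mod_cancel)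
qed

lemma digit_sum_add:
  assumes "b > 0"
  shows "digit_sum b h (k + m) x = digit_sum b h k (x mod b ^ k) + digit_sum b h m (x div b ^ k)"
proof -
  have "digit_sum b h (k + m) x = (\<Sum>i<k. h (x div b ^ i mod b)) + (\<Sum>i<m. h (x div b ^ (k + i) mod b))"
    unfolding digit_sum_def by (induction m) (simp_all add: ac_simps)
  also have "(\<Sum>i<k. h (x div b ^ i mod b)) = digit_sum b h k (x mod b ^ k)"
    unfolding digit_sum_def by (intro sum.cong) (auto simp: digit_of_mod_power assms)
  also have "(\<Sum>i<m. h (x div b ^ (k + i) mod b)) = digit_sum b h m (x div b ^ k)"
    unfolding digit_sum_def by (simp add: power_add div_mult2_eq)
  finally show ?thesis .
qed

lemma digit_sum_Suc:
  "b > 0 \<Longrightarrow> digit_sum b h (Suc k) x = h (x mod b) + digit_sum b h k (x div b)"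
  using digit_sum_add[of b h 1 k x] by (simp add: digit_sum_def)

lemma digit_sum_block:
  assumes "b > 0" "y < b ^ k"
  shows "digit_sum b h (k + m) (P * b ^ k + y) = digit_sum b h k y + digit_sum b h m P"
  using digit_sum_add[of b h k m "P * b ^ k + y"] assms by simp

lemma digit_sum_eq_of_less_power:
  assumes "b > 0" "h 0 = 0" "x < b ^ k" "k \<le> K"
  shows "digit_sum b h K x = digit_sum b h k x"
  using digit_sum_add[of b h k "K - k" x] assms by (simp add: digit_sum_def)

lemma gen_happy_eq_digit_sum:
  assumes "b > 1" "h 0 = 0" "x < b ^ k"
  shows "gen_happy b h x = digit_sum b h k x"
proof -
  have "x < 2 ^ x" by (rule less_exp)
  also have "\<dots> \<le> b ^ x" using assms(1) by (simp add: power_mono)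
  also have "\<dots> < b ^ Suc x" using assms(1) by simp
  finally have "x < b ^ Suc x" .
  then have "digit_sum b h (max k (Suc x)) x = digit_sum b h (Suc x) x"
    "digit_sum b h (max k (Suc x)) x = digit_sum b h k x"
    using digit_sum_eq_of_less_power[of b h x "Suc x" "max k (Suc x)"]
      digit_sum_eq_of_less_power[of b h x k "max k (Suc x)"] assms by simp_all
  then show ?thesis by (simp add: gen_happy_def digit_sum_def lessThan_Suc_atMost)
qed

fun repunit :: "nat \<Rightarrow> nat \<Rightarrow> nat" where
  "repunit b 0 = 0"
| "repunit b (Suc j) = 1 + b * repunit b j"

lemma repunit_less: "b > 1 \<Longrightarrow> repunit b j < b ^ j"
proof (induction j)
  case (Suc j)
  then have "b * (repunit b j + 1) \<le> b * b ^ j" by (intro mult_le_mono2) simp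
  with Suc.prems show ?case by (simp add: distrib_left)
qed simp

lemma digit_sum_repunit:
  assumes "b > 1" "h 1 = 1"
  shows "digit_sum b h j (repunit b j) = j"
proof (induction j)
  case (Suc j)
  have "(1 + b * repunit b j) mod b = 1"
    using assms(1) mod_mult_self2[of 1 b "repunit b j"] by simp
  moreover have "(1 + b * repunit b j) div b = repunit b j"
    using assms(1) div_mult_self2[of b 1 "repunit b j"] by simp
  ultimately
  show ?case using Suc assms by (simp add: digit_sum_Suc)
qed (simp add: digit_sum_def)

text \<open>The prefix is the digit 1 in position m - 1 followed by the repunit with s - 1 ones.\<close>

lemma exists_prefix_with_digit_sum:
  assumes "b > 1" "h 0 = 0" "h 1 = 1" "1 \<le> s" "s \<le> m"
  obtains P where "b ^ (m - 1) \<le> P" "P < b ^ m" "digit_sum b h m P = s"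
proof
  define R where "R = repunit b (s - 1)"
  have "b ^ (s - 1) \<le> b ^ (m - 1)" using assms by (intro power_increasing) auto
  then have R_less: "R < b ^ (m - 1)"
    using repunit_less[OF assms(1), of "s - 1"] unfolding R_def by linarith
  show "b ^ (m - 1) \<le> b ^ (m - 1) + R" by simp
  have "b ^ (m - 1) + R < 2 * b ^ (m - 1)" using R_less by simp
  also have "\<dots> \<le> b ^ m" using assms by (simp add: power_eq_if)
  finally show "b ^ (m - 1) + R < b ^ m" .
  have "digit_sum b h ((m - 1) + 1) (1 * b ^ (m - 1) + R) = digit_sum b h (m - 1) R + digit_sum b h 1 1"
    using assms(1) R_less by (intro digit_sum_block) auto
  moreover have "digit_sum b h (m - 1) R = s - 1"
    using digit_sum_eq_of_less_power[of b h R "s - 1" "m - 1"] repunit_less[OF assms(1)]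
      digit_sum_repunit[of b h] assms unfolding R_def by simp
  moreover have "digit_sum b h 1 1 = 1" using assms by (simp add: digit_sum_def)
  ultimately show "digit_sum b h m (b ^ (m - 1) + R) = s" using assms by simp
qed

lemma gen_happy_block:
  assumes "is_happy_digit_fun b h" "1 \<le> s" "s \<le> m"
  obtains P where "b ^ (m - 1) \<le> P" "P < b ^ m"
    "\<And>y. y < b ^ k \<Longrightarrow> gen_happy b h (P * b ^ k + y) = s + digit_sum b h k y"
proof -
  have hb: "b > 1" "h 0 = 0" "h 1 = 1" using assms(1) by (auto simp: is_happy_digit_fun_def)
  obtain P where P: "b ^ (m - 1) \<le> P" "P < b ^ m" "digit_sum b h m P = s"
    using exists_prefix_with_digit_sum[OF hb assms(2,3)] .
  have "gen_happy b h (P * b ^ k + y) = s + digit_sum b h k y" if "y < b ^ k" for y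
  proof -
    have "(P + 1) * b ^ k \<le> b ^ m * b ^ k" using P(2) by (intro mult_right_mono) auto
    then have "P * b ^ k + y < b ^ (k + m)" using that by (simp add: power_add algebra_simps)
    then show ?thesis
      using gen_happy_eq_digit_sum[of b h] hb digit_sum_block[of b y k h m P] that hb(1) P(3)
      by simp
  qed
  with P(1,2) that show ?thesis by blast
qed

section \<open>Distribution of digit sums\<close>

lemma digit_mean_mult_base_ge_1:
  assumes "is_happy_digit_fun b h"
  shows "1 \<le> digit_mean b h * real b"
proof -
  have "real (h 1) \<le> (\<Sum>j<b. real (h j))"
    using assms by (intro member_le_sum) (auto simp: is_happy_digit_fun_def)
  then show ?thesis using assms by (simp add: digit_mean_def is_happy_digit_fun_def)
qed

lemma digit_mean_pos:
  assumes "is_happy_digit_fun b h"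
  shows "0 < digit_mean b h"
  using digit_mean_mult_base_ge_1[OF assms] by (smt (verit) mult_nonpos_nonneg of_nat_0_le_iff)

lemma digit_sd_squared:
  "digit_sd b h ^ 2 = (1 / real b) * (\<Sum>j<b. (real (h j) - digit_mean b h) ^ 2)"
  unfolding digit_sd_def by (simp add: sum_nonneg)

lemma digit_sd_pos:
  assumes "is_happy_digit_fun b h"
  shows "0 < digit_sd b h"
proof -
  have "0 < (real (h 0) - digit_mean b h) ^ 2"
    using assms digit_mean_pos[OF assms] by (simp add: is_happy_digit_fun_def)
  also have "\<dots> \<le> (\<Sum>j<b. (real (h j) - digit_mean b h) ^ 2)"
    using assms by (intro member_le_sum) (auto simp: is_happy_digit_fun_def)
  finally show ?thesis using assms by (simp add: digit_sd_def is_happy_digit_fun_def)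
qed

lemma sum_lessThan_mult_base:
  fixes g :: "nat \<Rightarrow> 'a::comm_monoid_add"
  shows "(\<Sum>y<N * b. g y) = (\<Sum>m<N. \<Sum>j<b. g (m * b + j))"
proof -
  have "(\<Sum>j<b. g (m * b + j)) = sum g {m * b..<m * b + b}" for m
    using sum.shift_bounds_nat_ivl[of g 0 "m * b" b] by (simp add: atLeast0LessThan add.commute)
  then show ?thesis using sum.nat_group[of g b N] by simp
qed

text \<open>The digit sum of a uniformly random y < b^k is a sum of k independent copies of a
  random digit value, so it has mean k \<mu> and variance k \<sigma>^2.\<close>

lemma digit_sum_moments:
  fixes b :: nat and h :: "nat \<Rightarrow> nat"
  assumes "b > 1"
  defines "D \<equiv> \<lambda>k y. real (digit_sum b h k y) - real k * digit_mean b h"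
  shows "(\<Sum>y<b ^ k. D k y) = 0 \<and> (\<Sum>y<b ^ k. D k y ^ 2) = real k * real b ^ k * digit_sd b h ^ 2"
proof (induction k)
  case 0
  then show ?case by (simp add: D_def digit_sum_def)
next
  case (Suc k)
  define A where "A j = real (h j) - digit_mean b h" for j
  have sum_A: "(\<Sum>j<b. A j) = 0"
    using assms(1) by (simp add: A_def sum_subtractf digit_mean_def)
  have sum_A2: "(\<Sum>j<b. A j ^ 2) = real b * digit_sd b h ^ 2"
    using assms(1) by (simp add: A_def digit_sd_squared)
  have D_Suc: "D (Suc k) (m * b + j) = A j + D k m" if "j < b" for m j
    using that assms(1) by (simp add: D_def A_def digit_sum_Suc algebra_simps)
  have sum_D: "(\<Sum>y<b ^ Suc k. D (Suc k) y) = (\<Sum>m<b ^ k. \<Sum>j<b. A j + D k m)"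
    unfolding power_Suc2 sum_lessThan_mult_base using D_Suc by (intro sum.cong refl) auto
  have sum_D2: "(\<Sum>y<b ^ Suc k. D (Suc k) y ^ 2) = (\<Sum>m<b ^ k. \<Sum>j<b. (A j + D k m) ^ 2)"
    unfolding power_Suc2 sum_lessThan_mult_base using D_Suc by (intro sum.cong refl) auto
  have "(\<Sum>j<b. A j + D k m) = real b * D k m" for m
    using sum_A by (simp add: sum.distrib)
  moreover have "(\<Sum>j<b. (A j + D k m) ^ 2) = real b * digit_sd b h ^ 2 + real b * D k m ^ 2" for m
    using sum_A sum_A2
    by (simp add: power2_sum sum.distrib sum_distrib_left[symmetric] sum_distrib_right[symmetric]
        algebra_simps)
  ultimately show ?case
    using Suc unfolding sum_D sum_D2
    by (simp add: sum.distrib sum_distrib_left[symmetric] algebra_simps)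
qed

lemma card_large_values_le:
  fixes f :: "'a \<Rightarrow> real"
  assumes "finite S" "t > 0"
  shows "real (card {y\<in>S. t \<le> \<bar>f y\<bar>}) * t ^ 2 \<le> (\<Sum>y\<in>S. f y ^ 2)"
proof -
  have "real (card {y\<in>S. t \<le> \<bar>f y\<bar>}) * t ^ 2 = (\<Sum>y\<in>{y\<in>S. t \<le> \<bar>f y\<bar>}. t ^ 2)" by simp
  also have "\<dots> \<le> (\<Sum>y\<in>{y\<in>S. t \<le> \<bar>f y\<bar>}. f y ^ 2)"
    using assms(2) by (intro sum_mono) (metis (mono_tags) abs_le_square_iff abs_of_pos mem_Collect_eq)
  also have "\<dots> \<le> (\<Sum>y\<in>S. f y ^ 2)"
    using assms(1) by (intro sum_mono2) auto
  finally show ?thesis .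
qed

definition typical_digit_sums :: "nat \<Rightarrow> (nat \<Rightarrow> nat) \<Rightarrow> nat \<Rightarrow> real \<Rightarrow> nat set" where
  "typical_digit_sums b h k t =
     {y. y < b ^ k \<and> \<bar>real (digit_sum b h k y) - real k * digit_mean b h\<bar> < t}"

lemma card_typical_digit_sums_ge:
  assumes "b > 1" "t > 0" "real k * digit_sd b h ^ 2 \<le> \<epsilon> * t ^ 2"
  shows "real b ^ k * (1 - \<epsilon>) \<le> real (card (typical_digit_sums b h k t))"
proof -
  define D where "D y = real (digit_sum b h k y) - real k * digit_mean b h" for y
  define Bad where "Bad = {y\<in>{..<b ^ k}. t \<le> \<bar>D y\<bar>}"
  have typical: "typical_digit_sums b h k t = {..<b ^ k} - Bad"
    by (auto simp: typical_digit_sums_def Bad_def D_def)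
  have "real (card Bad) * t ^ 2 \<le> real k * real b ^ k * digit_sd b h ^ 2"
    using card_large_values_le[of "{..<b ^ k}" t D] digit_sum_moments[OF assms(1), of h k] assms(2)
    by (simp add: Bad_def D_def)
  also have "\<dots> \<le> real b ^ k * (\<epsilon> * t ^ 2)"
    using mult_left_mono[OF assms(3), of "real b ^ k"] by (simp add: algebra_simps)
  finally have "real (card Bad) \<le> real b ^ k * \<epsilon>"
    using assms(2) by (simp add: mult.assoc[symmetric])
  moreover have "card (typical_digit_sums b h k t) = b ^ k - card Bad"
    unfolding typical by (subst card_Diff_subset) (auto simp: Bad_def)
  moreover have "card Bad \<le> b ^ k"
    using card_mono[of "{..<b ^ k}" Bad] by (auto simp: Bad_def)
  ultimately show ?thesis by (simp add: of_nat_diff algebra_simps)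
qed

section \<open>Averaging over blocks\<close>

lemma card_nat_between_less:
  fixes u v :: real
  assumes "0 \<le> u" "u \<le> v"
  shows "real (card {s::nat. u < real s \<and> real s < v}) < v - u + 1"
proof -
  have "{s::nat. u < real s \<and> real s < v} \<subseteq> {nat \<lfloor>u\<rfloor> + 1..<nat \<lceil>v\<rceil>}"
  proof
    fix s :: nat assume "s \<in> {s. u < real s \<and> real s < v}"
    then have "\<lfloor>u\<rfloor> < int s" "int s < \<lceil>v\<rceil>" by (auto simp: floor_less_iff less_ceiling_iff)
    then have "nat \<lfloor>u\<rfloor> < s" "s < nat \<lceil>v\<rceil>" using assms by (simp_all add: nat_less_iff)
    then show "s \<in> {nat \<lfloor>u\<rfloor> + 1..<nat \<lceil>v\<rceil>}" by simp
  qed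
  then have "card {s::nat. u < real s \<and> real s < v} \<le> nat \<lceil>v\<rceil> - (nat \<lfloor>u\<rfloor> + 1)"
    using card_mono[of "{nat \<lfloor>u\<rfloor> + 1..<nat \<lceil>v\<rceil>}"] by fastforce
  moreover have "real_of_int \<lceil>v\<rceil> < v + 1" "u < real_of_int \<lfloor>u\<rfloor> + 1"
    by linarith+
  ultimately show ?thesis using assms by (simp add: of_nat_diff) linarith
qed

text \<open>Double counting of the pairs (s, y) with s + f y \<in> G: every x \<in> G contributes one pair for
  each y \<in> Y'.\<close>

lemma exists_shift_with_many_hits:
  fixes f :: "'a \<Rightarrow> nat"
  assumes "finite Y" "Y' \<subseteq> Y" "finite W" "W \<noteq> {}"
    and shift: "\<And>x y. x \<in> G \<Longrightarrow> y \<in> Y' \<Longrightarrow> f y \<le> x \<and> x - f y \<in> W"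
  shows "\<exists>s\<in>W. card G * card Y' \<le> card {y\<in>Y. s + f y \<in> G} * card W"
proof (rule ccontr)
  assume "\<not> ?thesis"
  then have less: "card {y\<in>Y. s + f y \<in> G} * card W < card G * card Y'" if "s \<in> W" for s
    using that by (simp add: not_le)
  have "card G \<le> card {s\<in>W. s + f y \<in> G}" if "y \<in> Y'" for y
  proof -
    have "G \<subseteq> (\<lambda>s. s + f y) ` {s\<in>W. s + f y \<in> G}"
    proof
      fix x assume "x \<in> G"
      with shift[OF _ that] have "x = (x - f y) + f y" "x - f y \<in> W" by auto
      with \<open>x \<in> G\<close> show "x \<in> (\<lambda>s. s + f y) ` {s\<in>W. s + f y \<in> G}"
        by (intro image_eqI[where x = "x - f y"]) auto
    qed
    then have "card G \<le> card ((\<lambda>s. s + f y) ` {s\<in>W. s + f y \<in> G})"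
      using assms(3) by (intro card_mono) auto
    also have "\<dots> \<le> card {s\<in>W. s + f y \<in> G}"
      using assms(3) by (intro card_image_le) auto
    finally show ?thesis .
  qed
  then have "card G * card Y' \<le> (\<Sum>y\<in>Y'. card {s\<in>W. s + f y \<in> G})"
    using sum_mono[of Y' "\<lambda>_. card G"] by (simp add: mult.commute)
  also have "\<dots> \<le> (\<Sum>y\<in>Y. card {s\<in>W. s + f y \<in> G})"
    using assms(1,2) by (intro sum_mono2) auto
  also have "\<dots> = (\<Sum>y\<in>Y. \<Sum>s\<in>W. of_bool (s + f y \<in> G))"
    using assms(3) by (simp add: Collect_conj_eq Int_commute)
  also have "\<dots> = (\<Sum>s\<in>W. \<Sum>y\<in>Y. of_bool (s + f y \<in> G))"
    by (rule sum.swap)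
  also have "\<dots> = (\<Sum>s\<in>W. card {y\<in>Y. s + f y \<in> G})"
    using assms(1) by (simp add: Collect_conj_eq Int_commute)
  finally have "card G * card Y' * card W \<le> (\<Sum>s\<in>W. card {y\<in>Y. s + f y \<in> G} * card W)"
    by (simp add: sum_distrib_right[symmetric])
  also have "\<dots> < (\<Sum>s\<in>W. card G * card Y')"
    using assms(3,4) less by (intro sum_strict_mono) auto
  finally show False by simp
qed

lemma strict_interval_block:
  assumes "b > 1" "m \<ge> 1" "b ^ (m - 1) \<le> P" "P < b ^ m"
  shows "strict_interval b (4 * m) {P * b ^ (3 * m) .. P * b ^ (3 * m) + b ^ (3 * m) - 1}"
proof -
  have "b ^ (4 * m - 1) = b ^ (m - 1) * b ^ (3 * m)"
    using assms(2) by (simp add: power_add[symmetric])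
  also have "\<dots> \<le> P * b ^ (3 * m)" using assms(3) by simp
  finally have lower: "b ^ (4 * m - 1) \<le> P * b ^ (3 * m)" .
  have "(P + 1) * b ^ (3 * m) \<le> b ^ m * b ^ (3 * m)" using assms(4) by (intro mult_right_mono) auto
  then have upper: "P * b ^ (3 * m) + b ^ (3 * m) \<le> b ^ (4 * m)" by (simp add: power_add[symmetric])
  have "real (b ^ (3 * m)) = real b powr (3 * real (4 * m) / 4)"
    using assms(1) by (simp add: powr_realpow[symmetric])
  moreover have "b ^ (3 * m) > 0" using assms(1) by simp
  ultimately show ?thesis
    using assms(2) lower upper by (auto simp: strict_interval_def int_interval_def)
qed

lemma strict_intervalE:
  assumes "strict_interval b n I" "b > 1"
  obtains a c where "I = {a..c}" "a \<le> c" "b ^ (n - 1) \<le> a" "c < b ^ n"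
    "real (card I) = real b powr (3 * real n / 4)"
proof -
  obtain a c where I: "I = {a..c}" and sub: "I \<subseteq> {b ^ (n - 1)..b ^ n - 1}"
    and card: "real (card I) = real b powr (3 * real n / 4)"
    using assms(1) unfolding strict_interval_def int_interval_def by blast
  have "real (card I) > 0" using card assms(2) by simp
  then have "a \<le> c" using I by (cases "a \<le> c") auto
  moreover have "c \<le> b ^ n - 1" "b ^ (n - 1) \<le> a" using I sub calculation by auto
  moreover have "c < b ^ n" using calculation(2) assms(2) by (simp add: less_Suc_eq_le[symmetric])
  ultimately show thesis using that I card by blast
qed

lemma typeC_of_typeC_gen_happy:
  assumes "typeC b h C (gen_happy b h x)"
  shows "typeC b h C x"
proof -
  obtain j where "(gen_happy b h ^^ j) (gen_happy b h x) \<in> C" using assms unfolding typeC_def by blast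
  then have "(gen_happy b h ^^ Suc j) x \<in> C" by (simp only: funpow_Suc_right comp_def)
  then show ?thesis unfolding typeC_def by blast
qed

lemma typeC_density_block_ge:
  assumes "b > 0" "G \<subseteq> {x. typeC b h C x}"
    and block: "\<And>y. y < b ^ k \<Longrightarrow> gen_happy b h (P * b ^ k + y) = s + digit_sum b h k y"
  shows "real (card {y\<in>{..<b ^ k}. s + digit_sum b h k y \<in> G}) / real b ^ k
           \<le> typeC_density b h C {P * b ^ k .. P * b ^ k + b ^ k - 1}"
proof -
  let ?I = "{P * b ^ k .. P * b ^ k + b ^ k - 1}"
  have hits: "(\<lambda>y. P * b ^ k + y) ` {y\<in>{..<b ^ k}. s + digit_sum b h k y \<in> G}
      \<subseteq> {x\<in>?I. typeC b h C x}"
    (is "?hits \<subseteq> _")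
  proof
    fix x assume "x \<in> (\<lambda>y. P * b ^ k + y) ` {y\<in>{..<b ^ k}. s + digit_sum b h k y \<in> G}"
    then obtain y where y: "y < b ^ k" "s + digit_sum b h k y \<in> G" and x: "x = P * b ^ k + y"
      by blast
    have "typeC b h C (gen_happy b h x)" using y x block assms(2) by auto
    then show "x \<in> {x\<in>?I. typeC b h C x}" using x y by (auto intro: typeC_of_typeC_gen_happy)
  qed
  have "card {y\<in>{..<b ^ k}. s + digit_sum b h k y \<in> G} = card ?hits"
    by (rule card_image[symmetric]) (simp add: inj_on_def)
  also have "\<dots> \<le> card {x\<in>?I. typeC b h C x}"
    using hits by (intro card_mono) auto
  finally have "card {y\<in>{..<b ^ k}. s + digit_sum b h k y \<in> G} \<le> card {x\<in>?I. typeC b h C x}" .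
  moreover have "card ?I = b ^ k" using assms(1) by simp
  ultimately show ?thesis
    using assms(1) by (simp add: typeC_density_def divide_right_mono)
qed

lemma typical_shift_in_window:
  assumes "y \<in> typical_digit_sums b h k t" "real a \<le> real x" "real x \<le> real c"
    and "real k * digit_mean b h + t \<le> real a"
  shows "digit_sum b h k y \<le> x"
    and "real a - real k * digit_mean b h - t < real (x - digit_sum b h k y)"
    and "real (x - digit_sum b h k y) < real c - real k * digit_mean b h + t"
proof -
  have "\<bar>real (digit_sum b h k y) - real k * digit_mean b h\<bar> < t"
    using assms(1) by (simp add: typical_digit_sums_def)
  then show "digit_sum b h k y \<le> x" using assms(2,4) by linarith
  then show "real a - real k * digit_mean b h - t < real (x - digit_sum b h k y)"
    and "real (x - digit_sum b h k y) < real c - real k * digit_mean b h + t"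
    using \<open>\<bar>_\<bar> < t\<close> assms(2,3) by (simp_all add: of_nat_diff)
qed

lemma exists_block_with_many_typeC:
  assumes hb: "is_happy_digit_fun b h"
    and I: "I = {a..c}" "a \<le> c" and t: "t > 0" and m: "m \<ge> 1"
    and lower: "3 * real m * digit_mean b h + t \<le> real a"
    and upper: "real c + t \<le> real m + 3 * real m * digit_mean b h"
    and typical: "typical_digit_sums b h (3 * m) t \<noteq> {}"
  shows "\<exists>I2. strict_interval b (4 * m) I2 \<and>
    real (card {x\<in>I. typeC b h C x}) * real (card (typical_digit_sums b h (3 * m) t))
      \<le> typeC_density b h C I2 * real b ^ (3 * m) * (real (card I) + 2 * t)"
proof -
  have b: "b > 1" using hb by (simp add: is_happy_digit_fun_def)
  define k where "k = 3 * m"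
  define T where "T = typical_digit_sums b h k t"
  define G where "G = {x\<in>I. typeC b h C x}"
  define u where "u = real a - real k * digit_mean b h - t"
  define W where "W = {s::nat. u < real s \<and> real s < real c - real k * digit_mean b h + t}"
  have "0 \<le> u" using lower by (simp add: u_def k_def)
  have W_range: "1 \<le> s \<and> s \<le> m" if "s \<in> W" for s
    using that \<open>0 \<le> u\<close> upper by (auto simp: W_def k_def)
  have "finite W" using W_range by (intro finite_subset[of W "{..m}"]) auto
  have card_W: "real (card W) < real (card I) + 2 * t"
    using card_nat_between_less[OF \<open>0 \<le> u\<close>, of "real c - real k * digit_mean b h + t"] I t
    by (simp add: W_def u_def of_nat_diff)
  have shift: "digit_sum b h k y \<le> x \<and> x - digit_sum b h k y \<in> W" if "x \<in> I" "y \<in> T" for x y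
    using typical_shift_in_window[of y b h k t a x c] that I lower
    by (auto simp: T_def W_def u_def k_def)
  have "W \<noteq> {}" using typical shift[of a] I by (auto simp: T_def k_def)
  then obtain s where "s \<in> W"
    and hits: "card G * card T \<le> card {y\<in>{..<b ^ k}. s + digit_sum b h k y \<in> G} * card W"
    using exists_shift_with_many_hits[of "{..<b ^ k}" T W G "digit_sum b h k"] \<open>finite W\<close> shift
    by (auto simp: T_def typical_digit_sums_def G_def)
  obtain P where P: "b ^ (m - 1) \<le> P" "P < b ^ m"
    and block: "\<And>y. y < b ^ k \<Longrightarrow> gen_happy b h (P * b ^ k + y) = s + digit_sum b h k y"
    using gen_happy_block[OF hb, of s m k] W_range[OF \<open>s \<in> W\<close>] by blast
  define I2 where "I2 = {P * b ^ k .. P * b ^ k + b ^ k - 1}"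
  have strict: "strict_interval b (4 * m) I2"
    using strict_interval_block[OF b m P] by (simp add: I2_def k_def)
  have "real (card G) * real (card T)
      \<le> real (card {y\<in>{..<b ^ k}. s + digit_sum b h k y \<in> G}) * real (card W)"
    using hits by (metis of_nat_le_iff of_nat_mult)
  also have "\<dots> \<le> typeC_density b h C I2 * real b ^ k * real (card W)"
    using typeC_density_block_ge[of b G h C k P s] b block
    by (intro mult_right_mono) (auto simp: G_def I2_def divide_le_eq)
  also have "\<dots> \<le> typeC_density b h C I2 * real b ^ k * (real (card I) + 2 * t)"
    using card_W by (intro mult_left_mono) (auto simp: typeC_density_def)
  finally show ?thesis using strict by (auto simp: G_def T_def k_def)
qed

lemma exists_block_with_typeC_density_ge:
  assumes hb: "is_happy_digit_fun b h"
    and I: "I = {a..c}" "a \<le> c" and t: "t > 0" and m: "m \<ge> 1"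
    and lower: "3 * real m * digit_mean b h + t \<le> real a"
    and upper: "real c + t \<le> real m + 3 * real m * digit_mean b h"
    and typical: "1 - \<beta> \<le> real (card (typical_digit_sums b h (3 * m) t)) / real b ^ (3 * m)" "\<beta> < 1"
    and window: "1 - \<xi> \<le> real (card I) / (real (card I) + 2 * t)"
  shows "\<exists>I2. strict_interval b (4 * m) I2 \<and>
    typeC_density b h C I * (1 - \<beta>) * (1 - \<xi>) \<le> typeC_density b h C I2"
proof -
  let ?T = "real (card (typical_digit_sums b h (3 * m) t)) / real b ^ (3 * m)"
  let ?L = "real (card I)"
  have "0 < ?T" using typical by linarith
  then obtain I2 where "strict_interval b (4 * m) I2" and many:
    "real (card {x\<in>I. typeC b h C x}) * real (card (typical_digit_sums b h (3 * m) t))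
      \<le> typeC_density b h C I2 * real b ^ (3 * m) * (?L + 2 * t)"
    using exists_block_with_many_typeC[OF hb I t m lower upper] by fastforce
  have "?L > 0" using I by simp
  have "typeC_density b h C I * (1 - \<beta>) * (1 - \<xi>)
      \<le> typeC_density b h C I * (1 - \<beta>) * (?L / (?L + 2 * t))"
    using window typical(2) by (intro mult_left_mono) (auto simp: typeC_density_def)
  also have "\<dots> \<le> typeC_density b h C I * ?T * (?L / (?L + 2 * t))"
    using typical(1) t by (intro mult_right_mono mult_left_mono) (auto simp: typeC_density_def)
  also have "\<dots> = real (card {x\<in>I. typeC b h C x}) * real (card (typical_digit_sums b h (3 * m) t))
      / (real b ^ (3 * m) * (?L + 2 * t))"
    using \<open>?L > 0\<close> by (simp add: typeC_density_def[of b h C I])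
  also have "\<dots> \<le> typeC_density b h C I2"
    using many t hb by (simp add: pos_divide_le_eq is_happy_digit_fun_def mult.assoc)
  finally show ?thesis using \<open>strict_interval b (4 * m) I2\<close> by blast
qed

section \<open>Choice of the parameters\<close>

text \<open>x - K sqrt x is increasing once sqrt x \<ge> K / 2, which nonnegativity at a0 guarantees.\<close>

lemma diff_mult_sqrt_mono:
  fixes a0 a K R :: real
  assumes "0 < a0" "a0 \<le> a" "0 \<le> K" "0 \<le> R" "R \<le> a0 - K * sqrt a0"
  shows "R \<le> a - K * sqrt a"
proof -
  have sq: "sqrt a0 * sqrt a0 = a0" "sqrt a * sqrt a = a" using assms(1,2) by simp_all
  then have "0 \<le> sqrt a0 * (sqrt a0 - K)" using assms(4,5) by (simp add: algebra_simps)
  then have "K \<le> sqrt a0" using assms(1) by (simp add: zero_le_mult_iff)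
  moreover have "sqrt a0 \<le> sqrt a" using assms(2) by simp
  moreover have "0 \<le> sqrt a" using assms(1,2) by simp
  ultimately have "0 \<le> (sqrt a - sqrt a0) * (sqrt a + sqrt a0 - K)"
    by (intro mult_nonneg_nonneg) linarith+
  also have "\<dots> = (a - K * sqrt a) - (a0 - K * sqrt a0)"
    using sq by (simp add: algebra_simps)
  finally show ?thesis using assms(5) by simp
qed

lemma sqrt_power_eq_powr:
  assumes "x > 0"
  shows "sqrt (x ^ n) = x powr (real n / 2)"
  using assms by (simp add: powr_realpow[symmetric] powr_half_sqrt[symmetric] powr_powr)

lemma threshold_at_lower_end:
  fixes \<mu> \<sigma> :: real and b n :: nat
  assumes b: "b > 1" and n: "n > 0" and \<mu>: "\<mu> > 0" "1 \<le> \<mu> * real b" and \<sigma>: "\<sigma> \<ge> 0"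
  defines "K \<equiv> \<sigma> / sqrt \<mu> * real b powr (real n / 8)"
    and "Q \<equiv> \<sigma> * real b powr (5 * real n / 8)"
  shows "K * sqrt (real b ^ (n - 1)) \<le> Q" "\<mu> * (K * sqrt (real b ^ (n - 1))) \<le> sqrt \<mu> * Q"
proof -
  have "sqrt (real b ^ (n - 1)) * real b powr (real n / 8) = real b powr ((real n - 1) / 2 + real n / 8)"
    using b n by (simp add: sqrt_power_eq_powr powr_add)
  also have "\<dots> = real b powr (5 * real n / 8) / real b powr (1 / 2)"
    by (simp add: powr_diff[symmetric] field_simps)
  finally have "sqrt (real b ^ (n - 1)) * real b powr (real n / 8)
      = real b powr (5 * real n / 8) / sqrt (real b)"
    using b by (simp add: powr_half_sqrt)
  then have K_eq: "K * sqrt (real b ^ (n - 1)) = Q / (sqrt \<mu> * sqrt (real b))"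
    by (simp add: K_def Q_def ac_simps)
  have "0 \<le> Q" "1 \<le> sqrt \<mu> * sqrt (real b)" using \<sigma> \<mu> by (simp_all add: Q_def real_sqrt_mult[symmetric])
  then show "K * sqrt (real b ^ (n - 1)) \<le> Q"
    using mult_left_mono[of 1 "sqrt \<mu> * sqrt (real b)" Q] unfolding K_eq by (simp add: divide_le_eq)
  have "\<mu> * (K * sqrt (real b ^ (n - 1))) = \<mu> / sqrt \<mu> * Q / sqrt (real b)"
    unfolding K_eq by simp
  also have "\<dots> = sqrt \<mu> * Q / sqrt (real b)" using \<mu> by (simp add: real_div_sqrt)
  also have "\<dots> \<le> sqrt \<mu> * Q"
    using b \<mu> \<open>0 \<le> Q\<close> mult_left_mono[of 1 "sqrt (real b)" "sqrt \<mu> * Q"] by (simp add: divide_le_eq)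
  finally show "\<mu> * (K * sqrt (real b ^ (n - 1))) \<le> sqrt \<mu> * Q" .
qed

lemma block_length_conditions:
  fixes \<mu> \<sigma> a :: real and b n :: nat
  assumes b: "b > 1" and n: "n > 0" and \<mu>: "\<mu> > 0" "1 \<le> \<mu> * real b" and \<sigma>: "\<sigma> \<ge> 0"
    and a: "real b ^ (n - 1) \<le> a"
    and B1: "4 * (1 + 3 * \<mu> + sqrt 2 * \<sigma> * real b powr (5 * real n / 8)) \<le> real b ^ (n - 1)"
    and B3: "4 * \<mu> * (3 * \<mu> + 1 + real b powr (3 * real n / 4)
               + 2 * \<sigma> * \<mu> powr (-1/2) * real b powr (5 * real n / 8)) \<le> real b ^ (n - 1)"
  defines "t \<equiv> \<sigma> / sqrt \<mu> * real b powr (real n / 8) * sqrt a"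
    and "L \<equiv> real b powr (3 * real n / 4)"
  shows "3 * \<mu> * L + 9 * \<mu> ^ 2 \<le> a - (1 + 6 * \<mu>) * t" "12 * \<mu> \<le> a - 4 * t"
proof -
  define a0 where "a0 = real b ^ (n - 1)"
  define Q where "Q = \<sigma> * real b powr (5 * real n / 8)"
  define K where "K = \<sigma> / sqrt \<mu> * real b powr (real n / 8)"
  have "0 < a0" "0 \<le> Q" "0 \<le> K" using b \<sigma> \<mu> by (simp_all add: a0_def Q_def K_def)
  have K_a0: "K * sqrt a0 \<le> Q" "\<mu> * (K * sqrt a0) \<le> sqrt \<mu> * Q"
    using threshold_at_lower_end[OF b n \<mu> \<sigma>] by (simp_all add: K_def Q_def a0_def)
  have "Q \<le> sqrt 2 * Q" using \<open>0 \<le> Q\<close> mult_right_mono[of 1 "sqrt 2" Q] by simp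
  then have B1': "4 + 12 * \<mu> + 4 * Q \<le> a0" using B1 by (simp add: a0_def Q_def mult.assoc)
  have "\<mu> * \<mu> powr (-1/2) = sqrt \<mu>"
    using \<mu> by (simp add: powr_minus_divide powr_half_sqrt real_div_sqrt)
  moreover have "4 * \<mu> * (3 * \<mu> + 1 + L + 2 * \<sigma> * \<mu> powr (-1/2) * real b powr (5 * real n / 8))
      = 12 * \<mu>\<^sup>2 + 4 * \<mu> + 4 * \<mu> * L + 8 * ((\<mu> * \<mu> powr (-1/2)) * Q)"
    unfolding Q_def by (simp add: algebra_simps power2_eq_square)
  ultimately have B3': "12 * \<mu>\<^sup>2 + 4 * \<mu> + 4 * \<mu> * L + 8 * (sqrt \<mu> * Q) \<le> a0"
    using B3 unfolding a0_def L_def by simp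
  have "(1 + 6 * \<mu>) * K * sqrt a0 = K * sqrt a0 + 6 * (\<mu> * (K * sqrt a0))"
    by (simp add: algebra_simps)
  moreover have "4 * \<mu> * L = 4 * (\<mu> * L)" "3 * \<mu> * L = 3 * (\<mu> * L)" by simp_all
  ultimately have "3 * \<mu> * L + 9 * \<mu> ^ 2 \<le> a0 - (1 + 6 * \<mu>) * K * sqrt a0"
    using K_a0 B1' B3' \<mu> by linarith
  then have "3 * \<mu> * L + 9 * \<mu> ^ 2 \<le> a - (1 + 6 * \<mu>) * K * sqrt a"
    using diff_mult_sqrt_mono[of a0 a "(1 + 6 * \<mu>) * K"] \<open>0 < a0\<close> a \<mu> \<open>0 \<le> K\<close>
    by (simp add: a0_def L_def mult.assoc)
  then show "3 * \<mu> * L + 9 * \<mu> ^ 2 \<le> a - (1 + 6 * \<mu>) * t"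
    by (simp add: t_def K_def mult.assoc)
  have "12 * \<mu> \<le> a0 - 4 * K * sqrt a0" using K_a0 B1' \<mu> by simp
  then have "12 * \<mu> \<le> a - 4 * K * sqrt a"
    using diff_mult_sqrt_mono[of a0 a "4 * K"] \<open>0 < a0\<close> a \<mu> \<open>0 \<le> K\<close>
    by (simp add: a0_def mult.assoc)
  then show "12 * \<mu> \<le> a - 4 * t"
    by (simp add: t_def K_def mult.assoc)
qed

lemma exists_block_length:
  fixes \<mu> t a L :: real
  assumes "\<mu> > 0" "t \<ge> 0"
    and A: "3 * \<mu> * L + 9 * \<mu> ^ 2 \<le> a - (1 + 6 * \<mu>) * t" and B: "12 * \<mu> \<le> a - 4 * t"
  obtains m :: nat where "m \<ge> 1" "3 * real m * \<mu> + t \<le> a"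
    "a + L - 1 + t \<le> real m + 3 * real m * \<mu>" "a < 4 * real m * \<mu>"
proof -
  define m where "m = nat \<lfloor>(a - t) / (3 * \<mu>)\<rfloor>"
  have "0 \<le> (a - t) / (3 * \<mu>)" using assms by simp
  then have "real m \<le> (a - t) / (3 * \<mu>)" "(a - t) / (3 * \<mu>) < real m + 1"
    unfolding m_def by linarith+
  then have m_le: "3 * real m * \<mu> \<le> a - t" and m_gt: "a - t < 3 * \<mu> * (real m + 1)"
    using assms(1) by (simp_all add: field_simps)
  have "3 * \<mu> * (L + 2 * t + 3 * \<mu>) < 3 * \<mu> * (real m + 1)"
    using A m_gt by (simp add: algebra_simps power2_eq_square)
  then have "L + 2 * t + 3 * \<mu> < real m + 1" using assms(1) by simp
  then have "a + L - 1 + t \<le> real m + 3 * real m * \<mu>" using m_gt by (simp add: algebra_simps)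
  moreover have "a < 4 * real m * \<mu>" using m_gt B by (simp add: algebra_simps)
  moreover have "m \<ge> 1" using calculation(2) assms B by (cases m) auto
  ultimately show thesis using that m_le by simp
qed

lemma typical_fraction_ge:
  fixes a :: real and n :: nat
  assumes hb: "is_happy_digit_fun b h" and "0 < a" and "real k * digit_mean b h \<le> a"
  defines "t \<equiv> digit_sd b h / sqrt (digit_mean b h) * real b powr (real n / 8) * sqrt a"
  shows "1 - real b powr (- real n / 4) \<le> real (card (typical_digit_sums b h k t)) / real b ^ k"
proof -
  define \<mu> where "\<mu> = digit_mean b h"
  define \<sigma> where "\<sigma> = digit_sd b h"
  have b: "b > 1" using hb by (simp add: is_happy_digit_fun_def)
  have "\<mu> > 0" "\<sigma> > 0" using digit_mean_pos digit_sd_pos hb by (simp_all add: \<mu>_def \<sigma>_def)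
  have "(real b powr (real n / 8)) ^ 2 = real b powr (real n / 4)"
    using b by (simp add: powr_realpow[symmetric] powr_powr)
  then have "real b powr (- real n / 4) * t ^ 2 = \<sigma> ^ 2 * a / \<mu>"
    using \<open>\<mu> > 0\<close> \<open>0 < a\<close> b
    by (simp add: t_def \<mu>_def \<sigma>_def power_mult_distrib power_divide powr_minus_divide)
  moreover have "real k * \<mu> * \<sigma> ^ 2 \<le> a * \<sigma> ^ 2"
    using assms(3) by (intro mult_right_mono) (auto simp: \<mu>_def)
  ultimately have "\<mu> * (real k * \<sigma> ^ 2) \<le> \<mu> * (real b powr (- real n / 4) * t ^ 2)"
    using \<open>\<mu> > 0\<close> by (simp add: field_simps)
  then have "real k * digit_sd b h ^ 2 \<le> real b powr (- real n / 4) * t ^ 2"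
    using \<open>\<mu> > 0\<close> by (simp add: \<sigma>_def)
  moreover have "t > 0" using \<open>\<mu> > 0\<close> \<open>\<sigma> > 0\<close> \<open>0 < a\<close> b by (simp add: t_def \<mu>_def \<sigma>_def)
  ultimately have "real b ^ k * (1 - real b powr (- real n / 4))
      \<le> real (card (typical_digit_sums b h k t))"
    using card_typical_digit_sums_ge[OF b] by blast
  then show ?thesis using b by (simp add: field_simps)
qed

lemma window_ratio_ge:
  fixes \<mu> \<sigma> a :: real
  assumes "\<mu> > 0" "\<sigma> \<ge> 0" "0 \<le> a" "a \<le> real b ^ n" "b > 0"
  defines "t \<equiv> \<sigma> / sqrt \<mu> * real b powr (real n / 8) * sqrt a"
    and "L \<equiv> real b powr (3 * real n / 4)"
  shows "1 - 2 * \<sigma> / sqrt \<mu> * real b powr (- real n / 8) \<le> L / (L + 2 * t)"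
proof -
  have "sqrt a \<le> real b powr (real n / 2)"
    using assms(3-5) real_sqrt_le_mono[OF assms(4)] by (simp add: sqrt_power_eq_powr)
  then have "real b powr (real n / 8) * sqrt a / L
      \<le> real b powr (real n / 8) * real b powr (real n / 2) / real b powr (3 * real n / 4)"
    using assms(5) unfolding L_def by (intro divide_right_mono mult_left_mono) auto
  also have "\<dots> = real b powr (- real n / 8)"
    by (simp add: powr_add[symmetric] powr_diff[symmetric])
  finally have "\<sigma> / sqrt \<mu> * (real b powr (real n / 8) * sqrt a / L)
      \<le> \<sigma> / sqrt \<mu> * real b powr (- real n / 8)"
    using assms(1,2) by (intro mult_left_mono) auto
  then have "1 - 2 * \<sigma> / sqrt \<mu> * real b powr (- real n / 8) \<le> 1 - 2 * t / L"
    by (simp add: t_def times_divide_eq_right mult.assoc)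
  moreover have "1 - 2 * t / L \<le> L / (L + 2 * t)"
  proof -
    have "L > 0" "t \<ge> 0" using assms by (simp_all add: L_def t_def)
    moreover have "(L - 2 * t) * (L + 2 * t) \<le> L * L" by (simp add: algebra_simps)
    ultimately have "(L - 2 * t) / L \<le> L / (L + 2 * t)" by (simp add: divide_simps)
    then show ?thesis using \<open>L > 0\<close> by (simp add: diff_divide_distrib)
  qed
  ultimately show ?thesis by linarith
qed

theorem theorem3p4:
  fixes b :: nat and h :: "nat \<Rightarrow> nat" and C :: "nat set" and I :: "nat set"
    and n :: nat and d :: real
  assumes hb: "is_happy_digit_fun b h"
    and hn: "n > 0"
    and hI: "strict_interval b n I"
    and hd: "d = typeC_density b h C I"
    and B1: "4 * (1 + 3 * digit_mean b h + sqrt 2 * digit_sd b h * real b powr (5 * real n / 8))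
               \<le> real b ^ (n - 1)"
    and B2: "sqrt (3 * digit_mean b h * real b) * digit_sd b h \<le> real b powr (3 * real n / 8)"
    and B3: "4 * digit_mean b h * (3 * digit_mean b h + 1 + real b powr (3 * real n / 4)
               + 2 * digit_sd b h * digit_mean b h powr (-1/2) * real b powr (5 * real n / 8))
               \<le> real b ^ (n - 1)"
  shows "\<exists>n2 :: nat. \<exists>I2. real n2 \<ge> real b ^ (n - 1) / digit_mean b h
           \<and> strict_interval b n2 I2
           \<and> typeC_density b h C I2 \<ge>
               d * (1 - real b powr (- real n / 4))
                 * (1 - 2 * digit_sd b h / sqrt (digit_mean b h) * real b powr (- real n / 8))"
proof -
  have b: "b > 1" using hb by (simp add: is_happy_digit_fun_def)
  define \<mu> where "\<mu> = digit_mean b h"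
  define \<sigma> where "\<sigma> = digit_sd b h"
  have \<mu>: "\<mu> > 0" "1 \<le> \<mu> * real b" and "\<sigma> > 0"
    using digit_mean_pos digit_mean_mult_base_ge_1 digit_sd_pos hb by (simp_all add: \<mu>_def \<sigma>_def)
  obtain a c where I: "I = {a..c}" "a \<le> c" "b ^ (n - 1) \<le> a" "c < b ^ n"
    and card_I: "real (card I) = real b powr (3 * real n / 4)"
    using strict_intervalE[OF hI b] .
  have "0 < a" using less_le_trans[OF zero_less_power I(3)] b by simp
  then have a: "real b ^ (n - 1) \<le> real a" "real a \<le> real b ^ n" "0 < real a"
    using I by (simp_all add: of_nat_le_iff[symmetric])
  define t where "t = \<sigma> / sqrt \<mu> * real b powr (real n / 8) * sqrt (real a)"
  have "t > 0" using \<mu> \<open>\<sigma> > 0\<close> a b by (simp add: t_def)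
  obtain m where m: "m \<ge> 1" "3 * real m * \<mu> + t \<le> real a"
    "real a + real (card I) - 1 + t \<le> real m + 3 * real m * \<mu>" "real a < 4 * real m * \<mu>"
    using exists_block_length[OF \<mu>(1) less_imp_le[OF \<open>t > 0\<close>]
        block_length_conditions[OF b hn \<mu> less_imp_le[OF \<open>\<sigma> > 0\<close>] a(1)
          B1[folded \<mu>_def \<sigma>_def] B3[folded \<mu>_def \<sigma>_def], folded t_def card_I]] .
  have "real b ^ (n - 1) < 4 * real m * \<mu>" using m(4) a(1) by linarith
  then have n2: "real b ^ (n - 1) / \<mu> \<le> real (4 * m)" using \<mu> by (simp add: divide_le_eq mult.commute)
  have upper: "real c + t \<le> real m + 3 * real m * \<mu>" using m(3) I(1,2) by (simp add: of_nat_diff)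
  have "real (3 * m) * digit_mean b h \<le> real a" using m(2) \<open>t > 0\<close> by (simp add: \<mu>_def)
  from typical_fraction_ge[OF hb a(3) this, of n]
  have typical: "1 - real b powr (- real n / 4)
      \<le> real (card (typical_digit_sums b h (3 * m) t)) / real b ^ (3 * m)"
    by (simp add: t_def \<mu>_def \<sigma>_def)
  have window: "1 - 2 * \<sigma> / sqrt \<mu> * real b powr (- real n / 8) \<le> real (card I) / (real (card I) + 2 * t)"
    using window_ratio_ge[OF \<mu>(1) _ _ a(2), of \<sigma>] \<open>\<sigma> > 0\<close> a(3) b by (simp add: t_def card_I)
  have "real b powr (- real n / 4) < 1" using b hn by (intro powr_less_one) auto
  with exists_block_with_typeC_density_ge[OF hb I(1,2) \<open>t > 0\<close> m(1) m(2)[unfolded \<mu>_def]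
      upper[unfolded \<mu>_def] typical _ window, of C]
  obtain I2 where "strict_interval b (4 * m) I2" and "d * (1 - real b powr (- real n / 4))
      * (1 - 2 * \<sigma> / sqrt \<mu> * real b powr (- real n / 8)) \<le> typeC_density b h C I2"
    using hd by blast
  with n2 show ?thesis unfolding \<mu>_def[symmetric] \<sigma>_def[symmetric] by blast
qed

end
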